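(* Let $\mathsf x\in\mathbb R^m$ be an $s$-rectifiable random vector and $n\in\mathbb N$ with $s<n\le m$. Then there exists a Borel measurable mapping $g\colon\mathbb R^{n\times m}\times\mathbb R^n\to\mathbb R^m$ such that $\mathbb P[g(\mathbf A,\mathbf A\mathsf x)\neq\mathsf x]=0$ for $\lambda^{n\times m}$-almost all $\mathbf A\in\mathbb R^{n\times m}$.
   Context: For $s\in\mathbb N$, a nonempty set $\mathcal U\subseteq\mathbb R^m$ is $s$-rectifiable if $\mathcal U=\varphi(\mathcal A)$ for some compact $\mathcal A\subseteq\mathbb R^s$ and Lipschitz $\varphi\colon\mathcal A\to\mathbb R^m$; countably $s$-rectifiable if it is a countable union of $s$-rectifiable sets; countably $(\mathscr H^s,s)$-rectifiable if it is $\mathscr H^s$-measurable and there is a countably $s$-rectifiable $\mathcal V$ with $\mathscr H^s(\mathcal U\setminus\mathcal V)=0$, where $\mathscr H^s$ is $s$-dimensional Hausdorff measure on $\mathbb R^m$. For a set $\mathcal U$, $\mathscr H^s|_{\mathcal U}(\mathcal B)=\mathscr H^s(\mathcal B\cap\mathcal U)$. A random vector $\mathsf x\in\mathbb R^m$ with distribution $\mu_{\mathsf x}$ is $s$-rectifiable if there is a countably $(\mathscr H^s,s)$-rectifiable set $\mathcal U$ with $\mu_{\mathsf x}\ll\mathscr H^s|_{\mathcal U}$. $\lambda^{n\times m}$ is Lebesgue measure on $\mathbb R^{n\times m}$. *)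

theory Defs
  imports "HOL-Probability.Probability"
begin

text \<open>Normalising constant of the s-dimensional Hausdorff measure (volume of the unit s-ball).\<close>
definition hausdorff_const :: "real \<Rightarrow> real" where
  "hausdorff_const s = pi powr (s / 2) / Gamma (s / 2 + 1)"

definition hausdorff_pre :: "real \<Rightarrow> real \<Rightarrow> 'a::metric_space set \<Rightarrow> ennreal" where
  "hausdorff_pre s \<delta> U =
     (INF C \<in> {C :: nat \<Rightarrow> 'a set. U \<subseteq> (\<Union>i. C i) \<and>
                 (\<forall>i. bounded (C i) \<and> diameter (C i) \<le> \<delta>)}.
        (\<Sum>i. (if C i = {} then 0
               else ennreal (hausdorff_const s * (diameter (C i) / 2) powr s))))"

definition hausdorff :: "real \<Rightarrow> 'a::metric_space set \<Rightarrow> ennreal" where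
  "hausdorff s U = (SUP \<delta> \<in> {0<..}. hausdorff_pre s \<delta> U)"

definition hausdorff_measurable :: "real \<Rightarrow> 'a::metric_space set \<Rightarrow> bool" where
  "hausdorff_measurable s U \<longleftrightarrow>
     (\<forall>T. hausdorff s T = hausdorff s (T \<inter> U) + hausdorff s (T - U))"

text \<open>s-rectifiable sets, with s = CARD('s) given by the index type of R^s.\<close>
definition rectifiable :: "'s::finite itself \<Rightarrow> 'a::metric_space set \<Rightarrow> bool" where
  "rectifiable _ U \<longleftrightarrow> U \<noteq> {} \<and>
     (\<exists>(A :: (real^'s) set) (\<phi> :: real^'s \<Rightarrow> 'a) L.
        compact A \<and> L-lipschitz_on A \<phi> \<and> U = \<phi> ` A)"

definition countably_rectifiable :: "'s::finite itself \<Rightarrow> 'a::metric_space set \<Rightarrow> bool" where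
  "countably_rectifiable S U \<longleftrightarrow>
     (\<exists>\<F>. countable \<F> \<and> (\<forall>F\<in>\<F>. rectifiable S F) \<and> U = \<Union>\<F>)"

definition countably_Hs_rectifiable :: "'s::finite itself \<Rightarrow> 'a::metric_space set \<Rightarrow> bool" where
  "countably_Hs_rectifiable S U \<longleftrightarrow>
     hausdorff_measurable (real CARD('s)) U \<and>
     (\<exists>V. countably_rectifiable S V \<and> hausdorff (real CARD('s)) (U - V) = 0)"

definition rectifiable_rv ::
  "'s::finite itself \<Rightarrow> 'o measure \<Rightarrow> ('o \<Rightarrow> 'a::{metric_space,topological_space}) \<Rightarrow> bool" where
  "rectifiable_rv S M X \<longleftrightarrow>
     (\<exists>U. countably_Hs_rectifiable S U \<and>
        (\<forall>B \<in> sets borel. hausdorff (real CARD('s)) (B \<inter> U) = 0 \<longrightarrow>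
            emeasure (distr M borel X) B = 0))"

end

(*
  For fixed x, only a null set of matrices A identifies x with another point of the countably
  s-rectifiable set V that carries the law of the random vector: if A (v - x) = 0, where v = phi a
  lies on a Lipschitz piece of V and (v - x)_k <> 0, then column k of A is determined by a and by
  the other columns, so these A lie in a Lipschitz image of a set of dimension s + n (m - 1) < n m.
  Writing V as a union of compact sets C_i, the decoder g (A, y) takes, in the first C_i meeting
  the fibre {v. A v = y}, the coordinatewise infimum of that fibre. It is Borel because fibres over
  compact sets depend upper semicontinuously on (A, y), and it returns x whenever A is injective at
  x on V. Fubini's theorem turns "for almost every x, for almost every A" into the claim.
*)
theory Submission
  imports Defs
begin

section \<open>Lipschitz maps on bounded sets\<close>

lemma lipschitz_on_bounded_image:
  assumes "L-lipschitz_on U f" "bounded U"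
  shows "bounded (f ` U)"
proof (cases "U = {}")
  case False
  then obtain x0 where "x0 \<in> U" by blast
  moreover obtain B where "\<And>x. x \<in> U \<Longrightarrow> dist x0 x \<le> B"
    using \<open>bounded U\<close> bounded_any_center by metis
  ultimately have "\<And>x. x \<in> U \<Longrightarrow> dist (f x0) (f x) \<le> L * B"
    using assms(1) by (meson lipschitz_on_nonneg lipschitz_onD mult_left_mono order_trans)
  then show ?thesis
    unfolding bounded_def by blast
qed simp

lemma (in bounded_bilinear) lipschitz_on_bounded_domain:
  assumes "bounded U" "C-lipschitz_on U f" "D-lipschitz_on U g"
  shows "\<exists>L. L-lipschitz_on U (\<lambda>x. prod (f x) (g x))"
proof -
  obtain F where F: "F > 0" "\<And>x. x \<in> U \<Longrightarrow> norm (f x) \<le> F"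
    using lipschitz_on_bounded_image[OF assms(2,1)] by (auto simp: bounded_pos)
  obtain G where G: "G > 0" "\<And>x. x \<in> U \<Longrightarrow> norm (g x) \<le> G"
    using lipschitz_on_bounded_image[OF assms(3,1)] by (auto simp: bounded_pos)
  have "C \<ge> 0" "D \<ge> 0"
    using assms(2,3) lipschitz_on_nonneg by blast+
  obtain K where K: "\<And>a b. norm (prod a b) \<le> norm a * norm b * K" "K \<ge> 0"
    using nonneg_bounded by blast
  have "dist (prod (f x) (g x)) (prod (f y) (g y)) \<le> K * (C * G + F * D) * dist x y"
    if "x \<in> U" "y \<in> U" for x y
  proof -
    have "prod (f x) (g x) - prod (f y) (g y) = prod (f x - f y) (g x) + prod (f y) (g x - g y)"
      by (simp add: diff_left diff_right)
    then have "dist (prod (f x) (g x)) (prod (f y) (g y))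
        \<le> norm (f x - f y) * norm (g x) * K + norm (f y) * norm (g x - g y) * K"
      by (metis dist_norm K(1) add_mono norm_triangle_le)
    also have "\<dots> \<le> (C * dist x y) * G * K + F * (D * dist x y) * K"
      using that lipschitz_onD[OF assms(2)] lipschitz_onD[OF assms(3)] F G K(2) \<open>C \<ge> 0\<close>
      by (intro add_mono mult_right_mono mult_mono) (auto simp: dist_norm)
    finally show ?thesis by (simp add: algebra_simps)
  qed
  moreover have "K * (C * G + F * D) \<ge> 0"
    using F G K(2) \<open>C \<ge> 0\<close> \<open>D \<ge> 0\<close> by simp
  ultimately show ?thesis by (auto intro: lipschitz_onI)
qed

lemma lipschitz_on_inverse:
  fixes f :: "'a::metric_space \<Rightarrow> real"
  assumes "C-lipschitz_on U f" "c > 0" "\<And>x. x \<in> U \<Longrightarrow> c \<le> \<bar>f x\<bar>"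
  shows "(C / c\<^sup>2)-lipschitz_on U (\<lambda>x. inverse (f x))"
proof (rule lipschitz_onI)
  fix x y assume "x \<in> U" "y \<in> U"
  then have "c \<le> \<bar>f x\<bar>" "c \<le> \<bar>f y\<bar>"
    using assms(3) by auto
  then have "c\<^sup>2 \<le> \<bar>f x\<bar> * \<bar>f y\<bar>" "f x \<noteq> 0" "f y \<noteq> 0"
    using assms(2) by (auto simp: power2_eq_square intro: mult_mono)
  moreover have "\<bar>f y - f x\<bar> \<le> C * dist x y"
    using lipschitz_onD[OF assms(1) \<open>x \<in> U\<close> \<open>y \<in> U\<close>] by (simp add: dist_real_def abs_minus_commute)
  ultimately have "\<bar>f y - f x\<bar> / (\<bar>f x\<bar> * \<bar>f y\<bar>) \<le> C * dist x y / c\<^sup>2"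
    using assms(2) by (intro frac_le) auto
  moreover have "inverse (f x) - inverse (f y) = (f y - f x) / (f x * f y)"
    using \<open>f x \<noteq> 0\<close> \<open>f y \<noteq> 0\<close> by (simp add: field_simps)
  then have "dist (inverse (f x)) (inverse (f y)) = \<bar>f y - f x\<bar> / (\<bar>f x\<bar> * \<bar>f y\<bar>)"
    by (simp add: dist_real_def abs_mult)
  ultimately show "dist (inverse (f x)) (inverse (f y)) \<le> C / c\<^sup>2 * dist x y"
    by simp
qed (use lipschitz_on_nonneg[OF assms(1)] in simp)

lemma lipschitz_on_vec_lambda:
  fixes f :: "'a::metric_space \<Rightarrow> 'i::finite \<Rightarrow> 'b::real_normed_vector"
  assumes "\<And>i. \<exists>C. C-lipschitz_on U (\<lambda>x. f x i)"
  shows "\<exists>L. L-lipschitz_on U (\<lambda>x. \<chi> i. f x i)"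
proof -
  obtain C where C: "\<And>i. (C i)-lipschitz_on U (\<lambda>x. f x i)"
    using assms by metis
  have "dist (\<chi> i. f x i) (\<chi> i. f y i) \<le> (\<Sum>i\<in>UNIV. C i) * dist x y" if "x \<in> U" "y \<in> U" for x y
  proof -
    have "dist (\<chi> i. f x i) (\<chi> i. f y i) \<le> (\<Sum>i\<in>UNIV. dist (f x i) (f y i))"
      unfolding dist_vec_def vec_lambda_beta by (rule L2_set_le_sum) simp
    also have "\<dots> \<le> (\<Sum>i\<in>UNIV. C i * dist x y)"
      using C that by (intro sum_mono) (auto dest: lipschitz_onD)
    finally show ?thesis by (simp add: sum_distrib_right)
  qed
  moreover have "(\<Sum>i\<in>UNIV. C i) \<ge> 0"
    using C lipschitz_on_nonneg by (intro sum_nonneg) blast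
  ultimately show ?thesis by (auto intro: lipschitz_onI)
qed

lemma negligible_lipschitz_image:
  fixes f :: "'a::euclidean_space \<Rightarrow> 'b::euclidean_space"
  assumes "negligible S" "L-lipschitz_on S f" "DIM('a) \<le> DIM('b)"
  shows "negligible (f ` S)"
  using assms(3,1)
proof (rule negligible_locally_Lipschitz_image)
  show "\<exists>T B. open T \<and> x \<in> T \<and> (\<forall>y\<in>S \<inter> T. norm (f y - f x) \<le> B * norm (y - x))" if "x \<in> S" for x
    using lipschitz_onD[OF assms(2) _ that] by (intro exI[of _ UNIV] exI[of _ L]) (auto simp: dist_norm)
qed

section \<open>Matrices identifying two points of a Lipschitz image\<close>

(* For d $ k ~= 0: replace column k of Z by the unique column that makes the matrix annihilate d.
   The result does not depend on column k of Z. *)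
definition solve_column :: "'m \<Rightarrow> real^'m \<Rightarrow> real^'m^'n \<Rightarrow> real^'m^'n" where
  "solve_column k d Z =
     (\<chi> r. let z = Z $ r - (Z $ r $ k) *\<^sub>R axis k 1 in z - (z \<bullet> d / d $ k) *\<^sub>R axis k 1)"

lemma solve_column_eq:
  fixes A Z :: "real^'m^'n"
  assumes "d $ k \<noteq> 0" "A *v d = 0" "\<And>r l. l \<noteq> k \<Longrightarrow> Z $ r $ l = A $ r $ l"
  shows "solve_column k d Z = A"
proof -
  have row: "Z $ r - (Z $ r $ k) *\<^sub>R axis k 1 = A $ r - (A $ r $ k) *\<^sub>R axis k 1" for r
    using assms(3) by (simp add: vec_eq_iff axis_def)
  have "(A $ r - (A $ r $ k) *\<^sub>R axis k 1) \<bullet> d = - (A $ r $ k * d $ k)" for r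
  proof -
    have "A $ r \<bullet> d = 0"
      using assms(2) by (simp add: vec_eq_iff matrix_vector_mult_def inner_vec_def mult.commute)
    then show ?thesis by (simp add: inner_diff_left inner_axis')
  qed
  then show ?thesis
    using assms(1) unfolding solve_column_def row by (simp add: vec_eq_iff axis_def Let_def)
qed

lemma lipschitz_solve_column:
  fixes d :: "real^'m^'n \<Rightarrow> real^'m"
  assumes S: "bounded S" and d: "L-lipschitz_on S d"
    and c: "c > 0" "\<And>Z. Z \<in> S \<Longrightarrow> c \<le> \<bar>d Z $ k\<bar>"
  shows "\<exists>L. L-lipschitz_on S (\<lambda>Z. solve_column k (d Z) Z)"
proof -
  define w where "w = (\<lambda>Z. inverse (d Z $ k) *\<^sub>R d Z)"
  define z where "z r = (\<lambda>Z :: real^'m^'n. Z $ r - (Z $ r $ k) *\<^sub>R axis k 1)" for r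
  have "\<exists>L. L-lipschitz_on S (\<lambda>Z. z r Z - (z r Z \<bullet> w Z) *\<^sub>R axis k 1)" for r
  proof -
    obtain B where "B-lipschitz_on (d ` S) (\<lambda>v. v $ k)"
      using bounded_linear.lipschitz_boundE[OF bounded_linear_vec_nth] by blast
    then have "(B * L)-lipschitz_on S (\<lambda>Z. d Z $ k)"
      using d by (rule lipschitz_on_compose2[rotated])
    then have "(B * L / c\<^sup>2)-lipschitz_on S (\<lambda>Z. inverse (d Z $ k))"
      using c by (rule lipschitz_on_inverse)
    from bounded_bilinear.lipschitz_on_bounded_domain[OF bounded_bilinear_scaleR S this d]
    obtain Bw where w: "Bw-lipschitz_on S w"
      unfolding w_def by blast
    have "bounded_linear (z r)"
      unfolding z_def
      by (intro bounded_linear_intros bounded_linear_vec_nth bounded_linear_compose[OF bounded_linear_vec_nth])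
    then obtain Bz where z: "Bz-lipschitz_on S (z r)"
      by (rule bounded_linear.lipschitz_boundE)
    from bounded_bilinear.lipschitz_on_bounded_domain[OF bounded_bilinear_inner S z w]
    obtain Bi where "Bi-lipschitz_on S (\<lambda>Z. z r Z \<bullet> w Z)"
      by blast
    from bounded_bilinear.lipschitz_on_bounded_domain[OF bounded_bilinear_scaleR S this
        lipschitz_on_constant[of S "axis k 1 :: real^'m"]]
    obtain Bs where "Bs-lipschitz_on S (\<lambda>Z. (z r Z \<bullet> w Z) *\<^sub>R (axis k 1 :: real^'m))"
      by blast
    with z have "(Bz + Bs)-lipschitz_on S (\<lambda>Z. z r Z - (z r Z \<bullet> w Z) *\<^sub>R axis k 1)"
      by (rule lipschitz_on_diff)
    then show ?thesis ..
  qed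
  then have "\<exists>L. L-lipschitz_on S (\<lambda>Z. \<chi> r. z r Z - (z r Z \<bullet> w Z) *\<^sub>R axis k 1)"
    by (rule lipschitz_on_vec_lambda)
  moreover have "solve_column k (d Z) Z = (\<chi> r. z r Z - (z r Z \<bullet> w Z) *\<^sub>R axis k 1)" for Z
    by (simp add: solve_column_def z_def w_def Let_def divide_inverse_commute)
  ultimately show ?thesis
    by simp
qed

lemma negligible_solve_column_image:
  fixes \<iota> :: "'s::finite \<Rightarrow> 'n::finite" and \<phi> :: "real^'s \<Rightarrow> real^'m" and S :: "(real^'m^'n) set"
  assumes "L-lipschitz_on K \<phi>" "r0 \<notin> range \<iota>" "bounded S" "c > 0"
    and S: "\<And>Z. Z \<in> S \<Longrightarrow>
      (\<chi> t. Z $ \<iota> t $ k) \<in> K \<and> c \<le> \<bar>(\<phi> (\<chi> t. Z $ \<iota> t $ k) - x) $ k\<bar> \<and> Z $ r0 $ k = 0"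
  shows "negligible ((\<lambda>Z. solve_column k (\<phi> (\<chi> t. Z $ \<iota> t $ k) - x) Z) ` S)"
proof -
  have "S \<subseteq> {Z. axis r0 (axis k 1) \<bullet> Z = 0}"
    using S by (auto simp: inner_axis')
  then have "negligible S"
    by (rule negligible_subset[rotated]) (simp add: negligible_hyperplane)
  have "bounded_linear (\<lambda>Z :: real^'m^'n. Z $ \<iota> t $ k)" for t
    using bounded_linear_compose[OF bounded_linear_vec_nth bounded_linear_vec_nth] .
  then have "\<exists>C. C-lipschitz_on S (\<lambda>Z. Z $ \<iota> t $ k)" for t
    using bounded_linear.lipschitz_boundE by blast
  then obtain B where "B-lipschitz_on S (\<lambda>Z. \<chi> t. Z $ \<iota> t $ k)"
    using lipschitz_on_vec_lambda[of S "\<lambda>Z t. Z $ \<iota> t $ k"] by blast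
  then have "(L * B)-lipschitz_on S (\<lambda>Z. \<phi> (\<chi> t. Z $ \<iota> t $ k))"
    using S by (intro lipschitz_on_compose2 lipschitz_on_subset[OF assms(1)]) auto
  then have "(L * B + 0)-lipschitz_on S (\<lambda>Z. \<phi> (\<chi> t. Z $ \<iota> t $ k) - x)"
    by (intro lipschitz_on_diff lipschitz_on_constant)
  then obtain L' where "L'-lipschitz_on S (\<lambda>Z. solve_column k (\<phi> (\<chi> t. Z $ \<iota> t $ k) - x) Z)"
    using lipschitz_solve_column[OF assms(3) _ assms(4)] S by blast
  with \<open>negligible S\<close> show ?thesis
    by (rule negligible_lipschitz_image) simp
qed

lemma solve_column_embedding:
  fixes A :: "real^'m^'n" and \<iota> :: "'s::finite \<Rightarrow> 'n"
  assumes "inj \<iota>" "d $ k \<noteq> 0" "A *v d = 0"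
  obtains Z where "(\<chi> t. Z $ \<iota> t $ k) = b" "solve_column k d Z = A" "\<And>r. r \<notin> range \<iota> \<Longrightarrow> Z $ r $ k = 0"
proof
  define Z :: "real^'m^'n" where
    "Z = (\<chi> r l. if l = k then (if r \<in> range \<iota> then b $ inv \<iota> r else 0) else A $ r $ l)"
  show "(\<chi> t. Z $ \<iota> t $ k) = b"
    by (simp add: Z_def vec_eq_iff inv_f_f[OF assms(1)])
  show "solve_column k d Z = A"
    using assms(2,3) by (rule solve_column_eq) (simp add: Z_def)
  show "Z $ r $ k = 0" if "r \<notin> range \<iota>" for r
    using that by (simp add: Z_def)
qed

lemma negligible_not_injective_at_lipschitz_image:
  fixes K :: "(real^'s::finite) set" and \<phi> :: "real^'s \<Rightarrow> real^'m::finite"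
  assumes lip: "L-lipschitz_on K \<phi>" and card: "CARD('s) < CARD('n::finite)"
  shows "negligible {A :: real^'m^'n. \<exists>v\<in>\<phi> ` K. v \<noteq> x \<and> A *v v = A *v x}"
proof -
  obtain \<iota> :: "'s \<Rightarrow> 'n" where inj: "inj \<iota>"
    using card_le_inj[of "UNIV::'s set" "UNIV::'n set"] card by auto
  have "range \<iota> \<noteq> UNIV"
    using card card_image[OF inj] by (metis less_irrefl)
  then obtain r0 where r0: "r0 \<notin> range \<iota>" by auto
  (* A bad matrix is the solve_column image of the matrix that stores the parameter b of the bad
     point in the rows range iota of column k and has a zero at (r0, k): these matrices lie in a
     hyperplane, which is where s < n enters. *)
  define a where "a k Z = (\<chi> t. Z $ \<iota> t $ k)" for k and Z :: "real^'m^'n"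
  define S where "S k q = {Z. a k Z \<in> K \<and> 1 / (real q + 1) \<le> \<bar>(\<phi> (a k Z) - x) $ k\<bar> \<and>
    Z $ r0 $ k = 0 \<and> norm Z \<le> real q}" for k and q :: nat
  have "{A. \<exists>v\<in>\<phi> ` K. v \<noteq> x \<and> A *v v = A *v x} \<subseteq> (\<Union>k q. (\<lambda>Z. solve_column k (\<phi> (a k Z) - x) Z) ` S k q)"
  proof safe
    fix A :: "real^'m^'n" and b assume "b \<in> K" "\<phi> b \<noteq> x" "A *v \<phi> b = A *v x"
    then obtain k where k: "(\<phi> b - x) $ k \<noteq> 0"
      by (metis vec_eq_iff vector_minus_component right_minus_eq)
    moreover have "A *v (\<phi> b - x) = 0"
      using \<open>A *v \<phi> b = A *v x\<close> by (simp add: matrix_vector_mult_diff_distrib)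
    ultimately obtain Z where Z: "a k Z = b" "A = solve_column k (\<phi> (a k Z) - x) Z" "Z $ r0 $ k = 0"
      using solve_column_embedding[OF inj] r0 unfolding a_def by metis
    obtain q :: nat where q: "norm Z \<le> real q" "1 / \<bar>(\<phi> b - x) $ k\<bar> \<le> real q"
      using real_arch_simple[of "max (norm Z) (1 / \<bar>(\<phi> b - x) $ k\<bar>)"] by auto
    have "1 / (real q + 1) \<le> \<bar>(\<phi> b - x) $ k\<bar>"
      using k q(2) by (simp add: field_simps)
    with Z q(1) \<open>b \<in> K\<close> have "Z \<in> S k q"
      by (simp add: S_def)
    with Z(2) show "A \<in> (\<Union>k q. (\<lambda>Z. solve_column k (\<phi> (a k Z) - x) Z) ` S k q)"
      by blast
  qed
  moreover have "negligible ((\<lambda>Z. solve_column k (\<phi> (a k Z) - x) Z) ` S k q)" for k q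
  proof -
    have "bounded (S k q)"
      by (rule bounded_subset[OF bounded_cball[of 0 "real q"]]) (auto simp: S_def)
    then show ?thesis
      unfolding a_def
      by (rule negligible_solve_column_image[OF lip r0 _ _, where c = "1 / (real q + 1)"]) (auto simp: S_def a_def)
  qed
  then have "negligible (\<Union>k q. (\<lambda>Z. solve_column k (\<phi> (a k Z) - x) Z) ` S k q)"
    by (intro negligible_Union negligible_countable_Union) auto
  ultimately show ?thesis
    using negligible_subset by blast
qed

section \<open>Rectifiable sets\<close>

lemma rectifiable_imp_compact:
  fixes S :: "'s::finite itself" and U :: "'a::metric_space set"
  assumes "rectifiable S U"
  shows "compact U"
proof -
  obtain A :: "(real^'s) set" and \<phi> L where "compact A" "L-lipschitz_on A \<phi>" "U = \<phi> ` A"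
    using assms unfolding rectifiable_def by blast
  then show ?thesis
    using compact_continuous_image lipschitz_on_continuous_on by blast
qed

lemma countably_rectifiable_compact_sequence:
  fixes S :: "'s::finite itself" and V :: "'a::metric_space set"
  assumes "countably_rectifiable S V"
  obtains C :: "nat \<Rightarrow> 'a set" where "\<And>i. compact (C i)" "V = (\<Union>i. C i)"
proof -
  obtain \<F> where \<F>: "countable \<F>" "\<forall>F\<in>\<F>. rectifiable S F" "V = \<Union>\<F>"
    using assms unfolding countably_rectifiable_def by blast
  let ?C = "from_nat_into (insert {} \<F>)"
  have range: "range ?C = insert {} \<F>"
    using \<F>(1) by (simp add: range_from_nat_into)
  have "compact (?C i)" for i
  proof -
    have "?C i \<in> insert {} \<F>"
      using range by blast
    then show ?thesis
      using \<F>(2) rectifiable_imp_compact by auto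
  qed
  moreover have "V = (\<Union>i. ?C i)"
    using \<F>(3) range by simp
  ultimately show ?thesis
    using that by blast
qed

lemma negligible_not_injective_at_countably_rectifiable:
  fixes V :: "(real^'m::finite) set"
  assumes "countably_rectifiable TYPE('s::finite) V" and card: "CARD('s) < CARD('n::finite)"
  shows "negligible {A :: real^'m^'n. \<exists>v\<in>V. v \<noteq> x \<and> A *v v = A *v x}"
proof -
  obtain \<F> where \<F>: "countable \<F>" "\<forall>F\<in>\<F>. rectifiable TYPE('s) F" "V = \<Union>\<F>"
    using assms unfolding countably_rectifiable_def by (elim exE conjE)
  have "negligible {A :: real^'m^'n. \<exists>v\<in>F. v \<noteq> x \<and> A *v v = A *v x}" if "F \<in> \<F>" for F
  proof -
    have "rectifiable TYPE('s) F"
      using \<F>(2) that by blast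
    then obtain K :: "(real^'s) set" and \<phi> L where lip: "L-lipschitz_on K \<phi>" and F: "F = \<phi> ` K"
      unfolding rectifiable_def by blast
    show ?thesis
      unfolding F by (rule negligible_not_injective_at_lipschitz_image[OF lip card])
  qed
  then have "negligible (\<Union>F\<in>\<F>. {A :: real^'m^'n. \<exists>v\<in>F. v \<noteq> x \<and> A *v v = A *v x})"
    using \<F>(1) by (intro negligible_countable_Union) auto
  moreover have "{A :: real^'m^'n. \<exists>v\<in>V. v \<noteq> x \<and> A *v v = A *v x}
      = (\<Union>F\<in>\<F>. {A. \<exists>v\<in>F. v \<noteq> x \<and> A *v v = A *v x})"
    using \<F>(3) by auto
  ultimately show ?thesis
    by simp
qed

lemma AE_distr_in_countably_rectifiable:
  fixes S :: "'s::finite itself" and X :: "'o \<Rightarrow> 'a::metric_space"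
  assumes "rectifiable_rv S M X"
  obtains V where "countably_rectifiable S V" "AE y in distr M borel X. y \<in> V"
proof -
  obtain U V where UV: "countably_rectifiable S V" "hausdorff (real CARD('s)) (U - V) = 0"
    and U: "\<forall>B \<in> sets borel. hausdorff (real CARD('s)) (B \<inter> U) = 0 \<longrightarrow> emeasure (distr M borel X) B = 0"
    using assms unfolding rectifiable_rv_def countably_Hs_rectifiable_def by blast
  obtain C :: "nat \<Rightarrow> 'a set" where C: "\<And>i. compact (C i)" "V = (\<Union>i. C i)"
    using countably_rectifiable_compact_sequence[OF UV(1)] by blast
  have "C i \<in> sets borel" for i
    using C(1) by (simp add: borel_closed compact_imp_closed)
  then have "- V \<in> sets borel"
    unfolding C(2) by (intro borel_comp sets.countable_UN) auto
  moreover have "hausdorff (real CARD('s)) (- V \<inter> U) = 0"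
    using UV(2) by (simp add: Diff_eq Int_commute)
  ultimately have "emeasure (distr M borel X) (- V) = 0"
    using U by blast
  with \<open>- V \<in> sets borel\<close> have "- V \<in> null_sets (distr M borel X)"
    by (intro null_setsI) simp_all
  then have "AE y in distr M borel X. y \<in> V"
    by (rule AE_I') auto
  with UV(1) show ?thesis
    using that by blast
qed

section \<open>A Borel decoder\<close>

lemma borel_measurable_vec_lambda:
  fixes f :: "'a \<Rightarrow> 'i::finite \<Rightarrow> real"
  assumes "\<And>j. (\<lambda>x. f x j) \<in> borel_measurable M"
  shows "(\<lambda>x. \<chi> j. f x j) \<in> borel_measurable M"
proof (subst borel_measurable_euclidean_space, intro ballI)
  fix b :: "real^'i" assume "b \<in> Basis"
  then obtain j where "b = axis j 1"
    unfolding Basis_vec_def by auto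
  then show "(\<lambda>x. (\<chi> j. f x j) \<bullet> b) \<in> borel_measurable M"
    using assms by (simp add: inner_axis)
qed

lemma closed_solvable_in_compact:
  fixes K :: "(real^'m) set"
  assumes "compact K"
  shows "closed {w :: (real^'m^'n) \<times> (real^'n). \<exists>v\<in>K. fst w *v v = snd w}"
proof -
  have "continuous_on UNIV (\<lambda>p :: (real^'m) \<times> (real^'m^'n) \<times> (real^'n). fst (snd p) *v fst p)"
    unfolding matrix_vector_mult_def by (intro continuous_intros)
  then have "closed {p :: (real^'m) \<times> (real^'m^'n) \<times> (real^'n). fst (snd p) *v fst p = snd (snd p)}"
    by (intro closed_Collect_eq continuous_intros) (auto intro: continuous_on_subset)
  from closed_compact_projection[OF assms this] show ?thesis
    by (simp add: Bex_def)
qed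

lemma compact_fiber:
  fixes K :: "(real^'m) set" and A :: "real^'m^'n"
  assumes "compact K"
  shows "compact {v \<in> K. A *v v = y}"
proof -
  have "closed {v. A *v v = y}"
    by (intro closed_Collect_eq continuous_intros)
  from compact_Int_closed[OF assms this] show ?thesis
    by (simp add: Collect_conj_eq)
qed

lemma compact_Inf_image_le_iff:
  fixes f :: "'a::topological_space \<Rightarrow> real"
  assumes "compact F" "continuous_on F f" "F \<noteq> {}"
  shows "Inf (f ` F) \<le> c \<longleftrightarrow> (\<exists>v\<in>F. f v \<le> c)"
proof -
  have "compact (f ` F)" "f ` F \<noteq> {}"
    using assms by (auto intro: compact_continuous_image)
  then have attained: "Inf (f ` F) \<in> f ` F" and lower: "\<And>v. v \<in> F \<Longrightarrow> Inf (f ` F) \<le> f v"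
    by (auto intro!: closed_contains_Inf cInf_lower bounded_imp_bdd_below compact_imp_bounded compact_imp_closed)
  show ?thesis
  proof
    assume "Inf (f ` F) \<le> c"
    with attained show "\<exists>v\<in>F. f v \<le> c"
      by auto
  next
    assume "\<exists>v\<in>F. f v \<le> c"
    with lower show "Inf (f ` F) \<le> c"
      by (auto intro: order_trans)
  qed
qed

lemma compact_sublevel:
  fixes f :: "'a::t2_space \<Rightarrow> real"
  assumes "compact K" "continuous_on K f"
  shows "compact {v \<in> K. f v \<le> c}"
proof -
  have "closed (f -` {..c} \<inter> K)"
    using continuous_on_closed_vimage[OF compact_imp_closed[OF assms(1)]] assms(2) by blast
  moreover have "{v \<in> K. f v \<le> c} = K \<inter> (f -` {..c} \<inter> K)"
    by auto
  ultimately show ?thesis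
    using compact_Int_closed[OF assms(1)] by simp
qed

lemma Inf_fiber_le_iff:
  fixes K :: "(real^'m) set" and A :: "real^'m^'n" and f :: "real^'m \<Rightarrow> real"
  assumes K: "compact K" and f: "continuous_on K f" and y: "\<exists>v\<in>K. A *v v = y"
  shows "Inf (f ` {v \<in> K. A *v v = y}) \<le> c \<longleftrightarrow> (\<exists>v\<in>{v \<in> K. f v \<le> c}. A *v v = y)"
proof -
  have "compact {v \<in> K. A *v v = y}"
    using K by (rule compact_fiber)
  moreover have "continuous_on {v \<in> K. A *v v = y} f"
    using f by (rule continuous_on_subset) auto
  moreover have "{v \<in> K. A *v v = y} \<noteq> {}"
    using y by auto
  ultimately have "Inf (f ` {v \<in> K. A *v v = y}) \<le> c \<longleftrightarrow> (\<exists>v\<in>{v \<in> K. A *v v = y}. f v \<le> c)"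
    by (rule compact_Inf_image_le_iff)
  then show ?thesis
    by auto
qed

lemma borel_measurable_Inf_fiber:
  fixes K :: "(real^'m) set" and f :: "real^'m \<Rightarrow> real"
  assumes K: "compact K" and f: "continuous_on K f"
  shows "(\<lambda>w :: (real^'m^'n) \<times> (real^'n). Inf (f ` {v \<in> K. fst w *v v = snd w})) \<in> borel_measurable borel"
  unfolding borel_measurable_iff_le
proof
  fix c
  define P where "P = {w :: (real^'m^'n) \<times> (real^'n). \<exists>v\<in>K. fst w *v v = snd w}"
  define Q where "Q = {w :: (real^'m^'n) \<times> (real^'n). \<exists>v\<in>{v \<in> K. f v \<le> c}. fst w *v v = snd w}"
  have "closed P"
    unfolding P_def using K by (rule closed_solvable_in_compact)
  have "closed Q"
    unfolding Q_def using compact_sublevel[OF K f] by (rule closed_solvable_in_compact)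
  have "{w \<in> space borel. Inf (f ` {v \<in> K. fst w *v v = snd w}) \<le> c} = Q \<union> {w. w \<notin> P \<and> Inf ({} :: real set) \<le> c}"
  proof (intro set_eqI)
    fix w :: "(real^'m^'n) \<times> (real^'n)"
    show "w \<in> {w \<in> space borel. Inf (f ` {v \<in> K. fst w *v v = snd w}) \<le> c} \<longleftrightarrow>
        w \<in> Q \<union> {w. w \<notin> P \<and> Inf ({} :: real set) \<le> c}"
    proof (cases "w \<in> P")
      case True
      then show ?thesis
        using Inf_fiber_le_iff[OF K f, of "fst w" "snd w" c] by (auto simp: P_def Q_def)
    next
      case False
      (* the fibre is empty and the infimum takes the junk value Inf {} *)
      then have empty: "{v \<in> K. fst w *v v = snd w} = {}" and "w \<notin> Q"
        by (auto simp: P_def Q_def)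
      show ?thesis
        using False \<open>w \<notin> Q\<close> by (simp add: empty)
    qed
  qed
  also have "\<dots> \<in> sets borel"
  proof (cases "Inf ({} :: real set) \<le> c")
    case True
    then have "Q \<union> {w. w \<notin> P \<and> Inf ({} :: real set) \<le> c} = Q \<union> - P"
      by auto
    with \<open>closed P\<close> \<open>closed Q\<close> show ?thesis
      by (simp add: borel_closed borel_open open_Compl sets.Un)
  qed (simp add: borel_closed \<open>closed Q\<close>)
  finally show "{w \<in> space borel. Inf (f ` {v \<in> K. fst w *v v = snd w}) \<le> c}
      \<in> sets (borel :: ((real^'m^'n) \<times> (real^'n)) measure)" .
qed

(* Choosing by a coordinatewise infimum over a compact fibre, rather than by SOME, keeps the decoder
   Borel. *)
definition fiber_decoder :: "(nat \<Rightarrow> (real^'m) set) \<Rightarrow> (real^'m^'n) \<times> (real^'n) \<Rightarrow> real^'m" where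
  "fiber_decoder C w =
     (let i = LEAST i. \<exists>v\<in>C i. fst w *v v = snd w
      in \<chi> j. Inf ((\<lambda>v. v $ j) ` {v \<in> C i. fst w *v v = snd w}))"

lemma borel_measurable_fiber_decoder:
  fixes C :: "nat \<Rightarrow> (real^'m) set"
  assumes "\<And>i. compact (C i)"
  shows "(fiber_decoder C :: (real^'m^'n) \<times> (real^'n) \<Rightarrow> real^'m) \<in> borel_measurable borel"
proof -
  have "{w :: (real^'m^'n) \<times> (real^'n). \<exists>v\<in>C i. fst w *v v = snd w} \<in> sets borel" for i
    using closed_solvable_in_compact[OF assms] by (rule borel_closed)
  then have "(\<lambda>w :: (real^'m^'n) \<times> (real^'n). \<exists>v\<in>C i. fst w *v v = snd w)
      \<in> measurable borel (count_space UNIV)" for i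
    unfolding pred_def by simp
  then have least: "(\<lambda>w :: (real^'m^'n) \<times> (real^'n). LEAST i. \<exists>v\<in>C i. fst w *v v = snd w)
      \<in> measurable borel (count_space UNIV)"
    by (rule measurable_Least)
  have inf:  "(\<lambda>w :: (real^'m^'n) \<times> (real^'n). Inf ((\<lambda>v. v $ j) ` {v \<in> C i. fst w *v v = snd w}))
      \<in> borel_measurable borel" for i j
    using assms by (rule borel_measurable_Inf_fiber) (intro continuous_intros)
  have "(\<lambda>w :: (real^'m^'n) \<times> (real^'n).
      Inf ((\<lambda>v. v $ j) ` {v \<in> C (LEAST i. \<exists>v\<in>C i. fst w *v v = snd w). fst w *v v = snd w}))
      \<in> borel_measurable borel" for j
    by (rule measurable_compose_countable[OF inf least])
  then show ?thesis
    unfolding fiber_decoder_def Let_def by (rule borel_measurable_vec_lambda)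
qed

lemma fiber_decoder_eq:
  assumes "x \<in> (\<Union>i. C i)" "\<And>v. v \<in> (\<Union>i. C i) \<Longrightarrow> A *v v = A *v x \<Longrightarrow> v = x"
  shows "fiber_decoder C (A, A *v x) = x"
proof -
  define i where "i = (LEAST i. \<exists>v\<in>C i. A *v v = A *v x)"
  have "\<exists>v\<in>C i. A *v v = A *v x"
    unfolding i_def by (rule LeastI_ex) (use assms(1) in blast)
  then have fiber: "{v \<in> C i. A *v v = A *v x} = {x}"
    using assms(2) by blast
  have "fiber_decoder C (A, A *v x) = (\<chi> j. Inf ((\<lambda>v. v $ j) ` {v \<in> C i. A *v v = A *v x}))"
    by (simp add: fiber_decoder_def i_def Let_def)
  also have "\<dots> = x"
    unfolding fiber by simp
  finally show ?thesis .
qed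

lemma AE_lborel_fiber_decoder_eq:
  fixes C :: "nat \<Rightarrow> (real^'m::finite) set"
  assumes "countably_rectifiable TYPE('s::finite) (\<Union>i. C i)" "CARD('s) < CARD('n::finite)" "y \<in> (\<Union>i. C i)"
  shows "AE A in (lborel :: (real^'m^'n) measure). fiber_decoder C (A, A *v y) = y"
proof -
  let ?N = "{A :: real^'m^'n. \<exists>v\<in>(\<Union>i. C i). v \<noteq> y \<and> A *v v = A *v y}"
  have "?N \<in> null_sets lebesgue"
    using negligible_not_injective_at_countably_rectifiable[OF assms(1,2), of y]
    unfolding negligible_iff_null_sets .
  then have "AE A in lborel. A \<notin> ?N"
    using AE_completion_iff AE_not_in by blast
  then show ?thesis
  proof eventually_elim
    case (elim A)
    then show ?case
      using assms(3) by (intro fiber_decoder_eq) auto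
  qed
qed

lemma borel_measurable_matrix_vector_mult[measurable (raw)]:
  fixes f :: "'a \<Rightarrow> real^'m^'n" and g :: "'a \<Rightarrow> real^'m"
  assumes "f \<in> borel_measurable M" "g \<in> borel_measurable M"
  shows "(\<lambda>x. f x *v g x) \<in> borel_measurable M"
proof (rule borel_measurable_continuous_Pair[where H = "\<lambda>A v. A *v v", OF assms])
  show "continuous_on UNIV (\<lambda>p :: (real^'m^'n) \<times> (real^'m). fst p *v snd p)"
    unfolding matrix_vector_mult_def by (intro continuous_intros)
qed

lemma AE_lborel_AE_decoding:
  fixes g :: "(real^'m^'n) \<times> (real^'n) \<Rightarrow> real^'m" and X :: "'o \<Rightarrow> real^'m"
  assumes "prob_space M" and [measurable]: "X \<in> borel_measurable M" "g \<in> borel_measurable borel"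
    and "AE y in distr M borel X. AE A in lborel. g (A, A *v y) = y"
  shows "AE A in lborel. AE \<omega> in M. g (A, A *v X \<omega>) = X \<omega>"
proof -
  interpret D: prob_space "distr M borel X"
    using assms(1) by (rule prob_space.prob_space_distr) simp
  interpret pair_sigma_finite "distr M borel X" "lborel :: (real^'m^'n) measure" ..
  have "{p \<in> space (distr M borel X \<Otimes>\<^sub>M lborel). g (snd p, snd p *v fst p) = fst p}
      \<in> sets (distr M borel X \<Otimes>\<^sub>M lborel)"
    by measurable
  from AE_commute[THEN iffD1, OF this assms(4)]
  have "AE A in lborel. AE y in distr M borel X. g (A, A *v y) = y"
    by simp
  then show ?thesis
    by eventually_elim (subst (asm) AE_distr_iff; measurable)
qed

theorem corollary2:
  fixes M :: "'o measure"
    and X :: "'o \<Rightarrow> real^'m"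
  assumes "prob_space M"
    and "X \<in> borel_measurable M"
    and "rectifiable_rv TYPE('s::finite) M X"
    and "CARD('s) < CARD('n::finite)"
    and "CARD('n) \<le> CARD('m::finite)"
  shows "\<exists>g :: (real^'m^'n) \<times> (real^'n) \<Rightarrow> real^'m.
           g \<in> borel_measurable borel \<and>
           (AE A in lborel.
              measure M {\<omega> \<in> space M. g (A, A *v X \<omega>) \<noteq> X \<omega>} = 0)"
proof -
  obtain V :: "(real^'m) set" where V: "countably_rectifiable TYPE('s) V" "AE y in distr M borel X. y \<in> V"
    using AE_distr_in_countably_rectifiable[OF assms(3)] .
  obtain C :: "nat \<Rightarrow> (real^'m) set" where C: "\<And>i. compact (C i)" "V = (\<Union>i. C i)"
    using countably_rectifiable_compact_sequence[OF V(1)] by blast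
  let ?g = "fiber_decoder C :: (real^'m^'n) \<times> (real^'n) \<Rightarrow> real^'m"
  have g[measurable]: "?g \<in> borel_measurable borel"
    using C(1) by (rule borel_measurable_fiber_decoder)
  have "AE y in distr M borel X. AE A in lborel. ?g (A, A *v y) = y"
    using V(2)
  proof eventually_elim
    case (elim y)
    with V(1) assms(4) show ?case
      unfolding C(2) by (rule AE_lborel_fiber_decoder_eq)
  qed
  then have "AE A in lborel. AE \<omega> in M. ?g (A, A *v X \<omega>) = X \<omega>"
    by (rule AE_lborel_AE_decoding[OF assms(1,2) g])
  then have "AE A in lborel. measure M {\<omega> \<in> space M. ?g (A, A *v X \<omega>) \<noteq> X \<omega>} = 0"
    by eventually_elim (use assms(2) in \<open>auto intro!: measure_eq_0_null_sets simp: AE_iff_null\<close>)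
  with g show ?thesis
    by blast
qed

end
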